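(* For every real $r\ge0$, the sphere $\{Y\in\mathcal{M}: d_{GH}(\Delta_1,Y)=r\}$ in the Gromov–Hausdorff space $\mathcal{M}$ is path connected (as a subspace of the metric space $(\mathcal{M},d_{GH})$).
   Context: $\mathcal{M}$ denotes the set of isometry classes of compact metric spaces endowed with the Gromov–Hausdorff distance $d_{GH}$ (a metric on $\mathcal{M}$): $d_{GH}(X,Y)$ is the infimum of $r$ such that there exist a metric space $Z$ and subsets $X',Y'\subset Z$ isometric to $X,Y$ with Hausdorff distance $d_H(X',Y')\le r$. $\Delta_1$ is the single-point metric space. *)

theory Defs
  imports "HOL-Analysis.Analysis"
begin

text \<open>Carriers are taken inside the type real, which has cardinality of the
  continuum; every compact metric space has cardinality at most the
  continuum, so every compact metric space has such a representative.\<close>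

type_synonym cms = "real set \<times> (real \<Rightarrow> real \<Rightarrow> real)"

definition is_cms :: "cms \<Rightarrow> bool" where
  "is_cms X \<longleftrightarrow> fst X \<noteq> {} \<and> Metric_space (fst X) (snd X)
     \<and> compact_space (Metric_space.mtopology (fst X) (snd X))"

definition isom_emb :: "cms \<Rightarrow> real set \<Rightarrow> (real \<Rightarrow> real \<Rightarrow> real) \<Rightarrow> (real \<Rightarrow> real) \<Rightarrow> bool" where
  "isom_emb X Z dZ f \<longleftrightarrow> f ` fst X \<subseteq> Z \<and>
     (\<forall>x\<in>fst X. \<forall>y\<in>fst X. dZ (f x) (f y) = snd X x y)"

definition hausd :: "(real \<Rightarrow> real \<Rightarrow> real) \<Rightarrow> real set \<Rightarrow> real set \<Rightarrow> real" where
  "hausd d A B = max (SUP a\<in>A. INF b\<in>B. d a b) (SUP b\<in>B. INF a\<in>A. d a b)"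

text \<open>Gromov--Hausdorff distance.  The ambient space Z may be taken with
  carrier in real (it suffices to consider Z = union of the two images).\<close>
definition dGH :: "cms \<Rightarrow> cms \<Rightarrow> real" where
  "dGH X Y = Inf {r. \<exists>Z dZ f g. Metric_space Z dZ \<and> isom_emb X Z dZ f \<and> isom_emb Y Z dZ g
                   \<and> hausd dZ (f ` fst X) (g ` fst Y) \<le> r}"

definition Delta1 :: cms where
  "Delta1 = ({0}, \<lambda>_ _. 0)"

text \<open>Path connectedness of a subset A (closed under isometry) of the
  Gromov--Hausdorff space, expressed on representatives: continuity of a
  path into the quotient metric space (M, dGH) is continuity with respect
  to the pseudometric dGH on representatives.\<close>
definition gh_path_connected :: "cms set \<Rightarrow> bool" where
  "gh_path_connected A \<longleftrightarrow>
    (\<forall>Y0\<in>A. \<forall>Y1\<in>A. \<exists>\<gamma>::real \<Rightarrow> cms.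
       (\<forall>t\<in>{0..1}. \<gamma> t \<in> A) \<and> \<gamma> 0 = Y0 \<and> \<gamma> 1 = Y1 \<and>
       (\<forall>t\<in>{0..1}. \<forall>e>0. \<exists>\<delta>>0. \<forall>s\<in>{0..1}. \<bar>s - t\<bar> < \<delta> \<longrightarrow> dGH (\<gamma> s) (\<gamma> t) < e))"

end

theory Submission
  imports Defs
begin

text \<open>The one-point space is at distance diam Y / 2 from Y, so the sphere of radius r consists of
  the spaces of diameter 2r.  Two such spaces X and Y are joined through the products X \<times> Y with
  metric max (a d_X) (b d_Y): first b grows from 0 to 1 with a = 1, then a shrinks from 1 to 0 with
  b = 1.  Each of these products has diameter max a b \<cdot> 2r = 2r.  Changing the weights by
  \<Delta>a, \<Delta>b moves the product by at most \<Delta>a diam X + \<Delta>b diam Y (glue two copies of the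
  carrier), and X \<times> Y with weights 1, b lies within b diam Y of X, which gives continuity.\<close>

text \<open>Spaces built on pairs of reals are turned into representatives with carrier in real by an
  injection of the plane into the line.\<close>

definition enc :: "real \<times> real \<Rightarrow> real" where "enc = (SOME f. inj f)"

lemma inj_enc: "inj enc"
proof -
  obtain f :: "real \<times> real \<Rightarrow> real" where "bij_betw f (UNIV \<times> UNIV) UNIV"
    using card_of_Times_same_infinite[of "UNIV::real set"] card_of_ordIso infinite_UNIV_char_0 by blast
  then have "inj f" by (auto simp: bij_betw_def)
  then show ?thesis unfolding enc_def by (metis someI)
qed

definition dec :: "real \<Rightarrow> real \<times> real" where "dec = inv enc"

lemma dec_enc [simp]: "dec (enc p) = p"
  by (simp add: dec_def inj_enc)

lemma enc_eq_iff [simp]: "enc p = enc q \<longleftrightarrow> p = q"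
  using inj_enc by (auto dest: injD)

lemma Metric_space_enc_image:
  assumes "Metric_space S d"
  shows "Metric_space (enc ` S) (\<lambda>u v. d (dec u) (dec v))"
proof -
  interpret Metric_space S d by fact
  show ?thesis
    by unfold_locales (auto simp: commute intro: triangle)
qed

lemma is_cms_Metric_space: "is_cms X \<Longrightarrow> Metric_space (fst X) (snd X)"
  by (simp add: is_cms_def)

lemma is_cms_nonempty: "is_cms X \<Longrightarrow> fst X \<noteq> {}"
  by (simp add: is_cms_def)

lemma cms_zero: "is_cms X \<Longrightarrow> x \<in> fst X \<Longrightarrow> snd X x x = 0"
  using Metric_space.zero[OF is_cms_Metric_space] by blast

lemma cms_nonneg: "is_cms X \<Longrightarrow> 0 \<le> snd X x y"
  using Metric_space.nonneg[OF is_cms_Metric_space] by blast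

lemma cms_commute: "is_cms X \<Longrightarrow> snd X x y = snd X y x"
  using Metric_space.commute[OF is_cms_Metric_space] by blast

lemma cms_triangle:
  "is_cms X \<Longrightarrow> x \<in> fst X \<Longrightarrow> y \<in> fst X \<Longrightarrow> z \<in> fst X \<Longrightarrow> snd X x z \<le> snd X x y + snd X y z"
  using Metric_space.triangle[OF is_cms_Metric_space] by blast

lemma cms_bounded:
  assumes "is_cms X"
  obtains B where "\<And>x y. x \<in> fst X \<Longrightarrow> y \<in> fst X \<Longrightarrow> snd X x y \<le> B"
proof -
  interpret Metric_space "fst X" "snd X" using assms by (rule is_cms_Metric_space)
  have "compactin mtopology (fst X)"
    using assms by (simp add: is_cms_def compact_space_def)
  then have "mbounded (fst X)" by (rule compactin_imp_mbounded)
  then show ?thesis using that by (auto simp: mbounded_alt)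
qed

definition diam :: "cms \<Rightarrow> real" where
  "diam X = (SUP p\<in>fst X \<times> fst X. snd X (fst p) (snd p))"

lemma dist_le_diam:
  assumes "is_cms X" "x \<in> fst X" "y \<in> fst X"
  shows "snd X x y \<le> diam X"
proof -
  obtain B where "\<And>x y. x \<in> fst X \<Longrightarrow> y \<in> fst X \<Longrightarrow> snd X x y \<le> B"
    using cms_bounded[OF assms(1)] by blast
  then have "bdd_above ((\<lambda>p. snd X (fst p) (snd p)) ` (fst X \<times> fst X))"
    by (intro bdd_aboveI2) auto
  from cSUP_upper[OF _ this, of "(x, y)"] assms show ?thesis unfolding diam_def by auto
qed

lemma diam_le:
  assumes "is_cms X" "\<And>x y. x \<in> fst X \<Longrightarrow> y \<in> fst X \<Longrightarrow> snd X x y \<le> c"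
  shows "diam X \<le> c"
  unfolding diam_def using is_cms_nonempty[OF assms(1)] assms(2) by (intro cSUP_least) auto

lemma diam_nonneg:
  assumes "is_cms X" shows "0 \<le> diam X"
proof -
  obtain x where "x \<in> fst X" using is_cms_nonempty[OF assms] by blast
  then show ?thesis using dist_le_diam[OF assms] cms_zero[OF assms] by fastforce
qed

lemma INF_le_of_mem:
  fixes f :: "real \<Rightarrow> real"
  assumes "\<And>y. 0 \<le> f y" "y \<in> T" "f y \<le> e"
  shows "(INF y\<in>T. f y) \<le> e"
  using assms by (meson bdd_belowI2 cINF_lower order.trans)

lemma hausd_le:
  assumes "\<And>a b. 0 \<le> d a b" "A \<noteq> {}" "B \<noteq> {}"
    and "\<And>a. a \<in> A \<Longrightarrow> \<exists>b\<in>B. d a b \<le> e" "\<And>b. b \<in> B \<Longrightarrow> \<exists>a\<in>A. d a b \<le> e"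
  shows "hausd d A B \<le> e"
proof -
  have "(SUP a\<in>A. INF b\<in>B. d a b) \<le> e"
  proof (rule cSUP_least[OF assms(2)])
    fix a assume "a \<in> A"
    then obtain b where "b \<in> B" "d a b \<le> e" using assms(4) by blast
    then show "(INF b\<in>B. d a b) \<le> e" using assms(1) by (intro INF_le_of_mem)
  qed
  moreover have "(SUP b\<in>B. INF a\<in>A. d a b) \<le> e"
  proof (rule cSUP_least[OF assms(3)])
    fix b assume "b \<in> B"
    then obtain a where "a \<in> A" "d a b \<le> e" using assms(5) by blast
    then show "(INF a\<in>A. d a b) \<le> e" using assms(1) by (intro INF_le_of_mem)
  qed
  ultimately show ?thesis unfolding hausd_def by simp
qed

lemma hausd_nonneg:
  assumes "\<And>a b. 0 \<le> d a b" "a \<in> A" "b \<in> B" "\<And>a b. a \<in> A \<Longrightarrow> b \<in> B \<Longrightarrow> d a b \<le> c"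
  shows "0 \<le> hausd d A B"
proof -
  have "bdd_above ((\<lambda>a. INF b\<in>B. d a b) ` A)"
  proof (rule bdd_aboveI2)
    fix a' assume "a' \<in> A"
    then show "(INF b\<in>B. d a' b) \<le> c" using assms by (intro INF_le_of_mem)
  qed
  then have "(INF b\<in>B. d a b) \<le> (SUP a\<in>A. INF b\<in>B. d a b)"
    using assms(2) by (rule cSUP_upper2) simp
  moreover have "0 \<le> (INF b\<in>B. d a b)"
    using assms(1,3) by (intro cINF_greatest) auto
  ultimately show ?thesis unfolding hausd_def by linarith
qed

lemma hausd_commute:
  assumes "\<And>a b. d a b = d b a"
  shows "hausd d A B = hausd d B A"
  unfolding hausd_def by (simp add: assms max.commute)

lemma hausd_singleton_ge:
  assumes "bdd_above (d p ` B)" "b \<in> B"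
  shows "d p b \<le> hausd d {p} B"
proof -
  have "d p b \<le> (SUP b\<in>B. INF a\<in>{p}. d a b)"
    using cSUP_upper[OF assms(2,1)] by simp
  then show ?thesis unfolding hausd_def by linarith
qed

section \<open>Realizations of the Gromov--Hausdorff distance\<close>

definition gh_realizable :: "cms \<Rightarrow> cms \<Rightarrow> real \<Rightarrow> bool" where
  "gh_realizable X Y r \<longleftrightarrow> (\<exists>Z dZ f g. Metric_space Z dZ \<and> isom_emb X Z dZ f \<and> isom_emb Y Z dZ g
     \<and> hausd dZ (f ` fst X) (g ` fst Y) \<le> r)"

lemma dGH_eq_Inf: "dGH X Y = Inf (Collect (gh_realizable X Y))"
  unfolding dGH_def gh_realizable_def by (rule arg_cong[where f = Inf]) auto

lemma gh_realizable_nonneg: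
  assumes X: "is_cms X" and Y: "is_cms Y" and "gh_realizable X Y r"
  shows "0 \<le> r"
proof -
  obtain Z dZ f g where Z: "Metric_space Z dZ" and f: "isom_emb X Z dZ f" and g: "isom_emb Y Z dZ g"
    and r: "hausd dZ (f ` fst X) (g ` fst Y) \<le> r"
    using assms(3) by (auto simp: gh_realizable_def)
  interpret Metric_space Z dZ by (rule Z)
  obtain BX where BX: "\<And>x x'. x \<in> fst X \<Longrightarrow> x' \<in> fst X \<Longrightarrow> snd X x x' \<le> BX"
    using cms_bounded[OF X] by blast
  obtain BY where BY: "\<And>y y'. y \<in> fst Y \<Longrightarrow> y' \<in> fst Y \<Longrightarrow> snd Y y y' \<le> BY"
    using cms_bounded[OF Y] by blast
  obtain x0 y0 where x0: "x0 \<in> fst X" and y0: "y0 \<in> fst Y"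
    using is_cms_nonempty[OF X] is_cms_nonempty[OF Y] by blast
  have fZ: "f x \<in> Z" if "x \<in> fst X" for x using f that by (auto simp: isom_emb_def)
  have gZ: "g y \<in> Z" if "y \<in> fst Y" for y using g that by (auto simp: isom_emb_def)
  have "dZ (f x) (g y) \<le> BX + dZ (f x0) (g y0) + BY" if x: "x \<in> fst X" and y: "y \<in> fst Y" for x y
  proof -
    have "dZ (f x) (g y) \<le> dZ (f x) (f x0) + dZ (f x0) (g y0) + dZ (g y0) (g y)"
      using triangle[OF fZ[OF x] fZ[OF x0] gZ[OF y]] triangle[OF fZ[OF x0] gZ[OF y0] gZ[OF y]] by linarith
    also have "dZ (f x) (f x0) = snd X x x0" using f x x0 by (simp add: isom_emb_def)
    also have "dZ (g y0) (g y) = snd Y y0 y" using g y y0 by (simp add: isom_emb_def)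
    finally show ?thesis using BX[OF x x0] BY[OF y0 y] by linarith
  qed
  then have "0 \<le> hausd dZ (f ` fst X) (g ` fst Y)"
    using x0 y0 by (intro hausd_nonneg[where a = "f x0" and b = "g y0"]) auto
  with r show ?thesis by linarith
qed

lemma dGH_le:
  assumes "is_cms X" "is_cms Y" "gh_realizable X Y r"
  shows "dGH X Y \<le> r"
  unfolding dGH_eq_Inf
  using assms gh_realizable_nonneg[OF assms(1,2)] by (intro cInf_lower bdd_belowI) auto

lemma dGH_ge:
  assumes "gh_realizable X Y r" "\<And>r. gh_realizable X Y r \<Longrightarrow> c \<le> r"
  shows "c \<le> dGH X Y"
  unfolding dGH_eq_Inf using assms by (intro cInf_greatest) auto

lemma gh_realizable_commute:
  assumes "gh_realizable X Y r"
  shows "gh_realizable Y X r"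
proof -
  obtain Z dZ f g where Z: "Metric_space Z dZ" "isom_emb X Z dZ f" "isom_emb Y Z dZ g"
    and r: "hausd dZ (f ` fst X) (g ` fst Y) \<le> r"
    using assms by (auto simp: gh_realizable_def)
  have "hausd dZ (g ` fst Y) (f ` fst X) = hausd dZ (f ` fst X) (g ` fst Y)"
    using Metric_space.commute[OF Z(1)] by (intro hausd_commute) blast
  then show ?thesis using Z r unfolding gh_realizable_def by metis
qed

lemma dGH_commute: "dGH X Y = dGH Y X"
proof -
  have "Collect (gh_realizable X Y) = Collect (gh_realizable Y X)"
    using gh_realizable_commute by blast
  then show ?thesis by (simp add: dGH_eq_Inf)
qed

lemma gh_realizable_pairs:
  fixes Z :: "(real \<times> real) set" and f g :: "real \<Rightarrow> real \<times> real"
  assumes X: "is_cms X" and Y: "is_cms Y" and Z: "Metric_space Z d"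
    and f: "f ` fst X \<subseteq> Z" "\<And>x x'. x \<in> fst X \<Longrightarrow> x' \<in> fst X \<Longrightarrow> d (f x) (f x') = snd X x x'"
    and g: "g ` fst Y \<subseteq> Z" "\<And>y y'. y \<in> fst Y \<Longrightarrow> y' \<in> fst Y \<Longrightarrow> d (g y) (g y') = snd Y y y'"
    and net_X: "\<And>x. x \<in> fst X \<Longrightarrow> \<exists>y\<in>fst Y. d (f x) (g y) \<le> e"
    and net_Y: "\<And>y. y \<in> fst Y \<Longrightarrow> \<exists>x\<in>fst X. d (f x) (g y) \<le> e"
  shows "gh_realizable X Y e"
proof -
  let ?d = "\<lambda>u v. d (dec u) (dec v)"
  have "hausd ?d ((enc \<circ> f) ` fst X) ((enc \<circ> g) ` fst Y) \<le> e"
  proof (rule hausd_le)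
    show "0 \<le> ?d u v" for u v using Metric_space.nonneg[OF Z] by blast
  qed (use is_cms_nonempty[OF X] is_cms_nonempty[OF Y] net_X net_Y in auto)
  moreover have "isom_emb X (enc ` Z) ?d (enc \<circ> f)" "isom_emb Y (enc ` Z) ?d (enc \<circ> g)"
    using f g by (auto simp: isom_emb_def)
  ultimately show ?thesis
    using Metric_space_enc_image[OF Z] unfolding gh_realizable_def by blast
qed

lemma gh_realizable_net:
  assumes X: "is_cms X" and P: "is_cms P" and f: "isom_emb X (fst P) (snd P) f"
    and net: "\<And>u. u \<in> fst P \<Longrightarrow> \<exists>x\<in>fst X. snd P (f x) u \<le> e" and "0 \<le> e"
  shows "gh_realizable X P e"
proof -
  have "hausd (snd P) (f ` fst X) (id ` fst P) \<le> e"
  proof (rule hausd_le)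
    fix x assume "x \<in> f ` fst X"
    then show "\<exists>u\<in>id ` fst P. snd P x u \<le> e"
      using f cms_zero[OF P] \<open>0 \<le> e\<close> by (force simp: isom_emb_def)
  qed (use cms_nonneg[OF P] is_cms_nonempty[OF X] is_cms_nonempty[OF P] net in auto)
  moreover have "isom_emb P (fst P) (snd P) id" by (simp add: isom_emb_def)
  ultimately show ?thesis
    using is_cms_Metric_space[OF P] f unfolding gh_realizable_def by blast
qed

lemma dGH_self:
  assumes "is_cms X" shows "dGH X X \<le> 0"
proof (intro dGH_le gh_realizable_net[where f = id])
  show "\<exists>x\<in>fst X. snd X (id x) u \<le> 0" if "u \<in> fst X" for u
    using that by (intro bexI[of _ u]) (simp_all add: cms_zero[OF assms])
qed (simp_all add: isom_emb_def assms)

section \<open>Distance to the one-point space\<close>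

lemma is_cms_Delta1: "is_cms Delta1"
proof -
  have ms: "Metric_space {0::real} (\<lambda>_ _. 0)"
    by (simp add: Metric_space_def)
  have "compact_space (Metric_space.mtopology {0::real} (\<lambda>_ _. 0))"
    unfolding compact_space_def by (simp add: Metric_space.topspace_mtopology[OF ms])
  then show ?thesis using ms by (simp add: is_cms_def Delta1_def)
qed

lemma diam_le_of_gh_realizable_Delta1:
  assumes Y: "is_cms Y" and "gh_realizable Delta1 Y c"
  shows "diam Y \<le> 2 * c"
proof -
  obtain Z dZ f g where Z: "Metric_space Z dZ" and f: "isom_emb Delta1 Z dZ f" and g: "isom_emb Y Z dZ g"
    and c: "hausd dZ {f 0} (g ` fst Y) \<le> c"
    using assms(2) by (auto simp: gh_realizable_def Delta1_def)
  interpret Metric_space Z dZ by (rule Z)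
  have pZ: "f 0 \<in> Z" using f by (simp add: isom_emb_def Delta1_def)
  have gZ: "g y \<in> Z" if "y \<in> fst Y" for y using g that by (auto simp: isom_emb_def)
  obtain y0 where y0: "y0 \<in> fst Y" using is_cms_nonempty[OF Y] by blast
  obtain B where B: "\<And>y y'. y \<in> fst Y \<Longrightarrow> y' \<in> fst Y \<Longrightarrow> snd Y y y' \<le> B"
    using cms_bounded[OF Y] by blast
  have "bdd_above ((\<lambda>b. dZ (f 0) b) ` g ` fst Y)"
  proof (rule bdd_aboveI2)
    fix b assume "b \<in> g ` fst Y"
    then obtain y where y: "y \<in> fst Y" "b = g y" by blast
    have "dZ (f 0) (g y) \<le> dZ (f 0) (g y0) + dZ (g y0) (g y)"
      using triangle[OF pZ gZ[OF y0] gZ[OF y(1)]] .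
    also have "dZ (g y0) (g y) = snd Y y0 y" using g y y0 by (simp add: isom_emb_def)
    finally show "dZ (f 0) b \<le> dZ (f 0) (g y0) + B" unfolding y(2) using B[OF y0 y(1)] by linarith
  qed
  then have apex: "dZ (f 0) (g y) \<le> c" if "y \<in> fst Y" for y
    using hausd_singleton_ge[of dZ "f 0" "g ` fst Y" "g y"] c that by fastforce
  show ?thesis
  proof (rule diam_le[OF Y])
    fix y y' assume y: "y \<in> fst Y" and y': "y' \<in> fst Y"
    have "snd Y y y' = dZ (g y) (g y')" using g y y' by (simp add: isom_emb_def)
    also have "\<dots> \<le> dZ (f 0) (g y) + dZ (f 0) (g y')"
      using triangle[OF gZ[OF y] pZ gZ[OF y']] commute by simp
    finally show "snd Y y y' \<le> 2 * c" using apex[OF y] apex[OF y'] by linarith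
  qed
qed

text \<open>The cone over Y: the copy {0} \<times> Y of Y and an apex at distance c from all of it.  Giving the
  apex a second coordinate y0 \<in> Y lets the formula for distances within a layer cover it too.\<close>

lemma gh_realizable_Delta1_cone:
  assumes Y: "is_cms Y" and c: "0 < c" "diam Y \<le> 2 * c"
  shows "gh_realizable Delta1 Y c"
proof -
  obtain y0 where y0: "y0 \<in> fst Y" using is_cms_nonempty[OF Y] by blast
  define Z where "Z = insert (1::real, y0) ({0} \<times> fst Y)"
  define d where "d p q = (if fst p = fst q then snd Y (snd p) (snd q) else c)" for p q :: "real \<times> real"
  have Ydiam: "snd Y y y' \<le> 2 * c" if "y \<in> fst Y" "y' \<in> fst Y" for y y'
    using dist_le_diam[OF Y that] c by linarith
  have Z_snd: "snd p \<in> fst Y" if "p \<in> Z" for p using that y0 by (auto simp: Z_def)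
  have Z_layer: "p = q" if "p \<in> Z" "q \<in> Z" "fst p = fst q" "snd p = snd q" for p q
    using that by (simp add: prod_eq_iff)
  have "Metric_space Z d"
  proof
    fix p q show "0 \<le> d p q" "d p q = d q p"
      using c cms_nonneg[OF Y] cms_commute[OF Y] by (auto simp: d_def)
  next
    fix p q assume p: "p \<in> Z" and q: "q \<in> Z"
    show "d p q = 0 \<longleftrightarrow> p = q"
      using c Z_layer[OF p q] Metric_space.zero[OF is_cms_Metric_space[OF Y] Z_snd[OF p] Z_snd[OF q]]
      by (auto simp: d_def)
  next
    fix p q w assume p: "p \<in> Z" and q: "q \<in> Z" and w: "w \<in> Z"
    have "0 \<le> d p q" "0 \<le> d q w" using c cms_nonneg[OF Y] by (auto simp: d_def)
    then show "d p w \<le> d p q + d q w"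
      using c cms_triangle[OF Y Z_snd[OF p] Z_snd[OF q] Z_snd[OF w]] Ydiam[OF Z_snd[OF p] Z_snd[OF w]]
      by (simp add: d_def split: if_splits)
  qed
  then show ?thesis
  proof (rule gh_realizable_pairs[OF is_cms_Delta1 Y, where f = "\<lambda>_. (1, y0)" and g = "\<lambda>y. (0, y)"])
    show "(\<lambda>_. (1, y0)) ` fst Delta1 \<subseteq> Z" "(\<lambda>y. (0, y)) ` fst Y \<subseteq> Z"
      by (auto simp: Delta1_def Z_def)
    show "d (1, y0) (1, y0) = snd Delta1 x x'" for x x'
      using cms_zero[OF Y y0] by (simp add: Delta1_def d_def)
    show "d (0, y) (0, y') = snd Y y y'" for y y' by (simp add: d_def)
    show "\<exists>y\<in>fst Y. d (1, y0) (0, y) \<le> c" using y0 by (auto simp: d_def)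
    show "\<exists>x\<in>fst Delta1. d (1, y0) (0, y) \<le> c" for y by (simp add: Delta1_def d_def)
  qed
qed

lemma dGH_Delta1:
  assumes Y: "is_cms Y"
  shows "dGH Delta1 Y = diam Y / 2"
proof (rule antisym)
  have cone: "gh_realizable Delta1 Y (diam Y / 2 + \<eta>)" if "0 < \<eta>" for \<eta>
    using that diam_nonneg[OF Y] by (intro gh_realizable_Delta1_cone[OF Y]) auto
  show "dGH Delta1 Y \<le> diam Y / 2"
  proof (rule field_le_epsilon)
    fix \<eta> :: real assume "0 < \<eta>"
    then show "dGH Delta1 Y \<le> diam Y / 2 + \<eta>" by (rule dGH_le[OF is_cms_Delta1 Y cone])
  qed
  show "diam Y / 2 \<le> dGH Delta1 Y"
  proof (rule dGH_ge[OF cone[of 1]])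
    fix r assume "gh_realizable Delta1 Y r"
    then show "diam Y / 2 \<le> r" using diam_le_of_gh_realizable_Delta1[OF Y] by fastforce
  qed simp
qed

text \<open>Two copies of the common carrier, glued so that x in the copy of P is at distance
  d_P(x, y) + \<epsilon> from y in the copy of Q; the triangle inequality holds because
  d_P \<le> d_Q \<le> d_P + \<epsilon>.\<close>

lemma gh_realizable_same_carrier:
  assumes P: "is_cms P" and Q: "is_cms Q" and carrier: "fst Q = fst P"
    and le: "\<And>x y. x \<in> fst P \<Longrightarrow> y \<in> fst P \<Longrightarrow> snd P x y \<le> snd Q x y"
    and le_eps: "\<And>x y. x \<in> fst P \<Longrightarrow> y \<in> fst P \<Longrightarrow> snd Q x y \<le> snd P x y + \<epsilon>"
    and eps: "0 < \<epsilon>"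
  shows "gh_realizable P Q \<epsilon>"
proof -
  define Z where "Z = {0, 1::real} \<times> fst P"
  define d where "d p q = (if fst p = fst q then (if fst p = 0 then snd P else snd Q) (snd p) (snd q)
    else snd P (snd p) (snd q) + \<epsilon>)" for p q :: "real \<times> real"
  have zero_P: "snd P x y = 0 \<longleftrightarrow> x = y" and zero_Q: "snd Q x y = 0 \<longleftrightarrow> x = y"
    if "x \<in> fst P" "y \<in> fst P" for x y
    using that carrier Metric_space.zero[OF is_cms_Metric_space[OF P]]
      Metric_space.zero[OF is_cms_Metric_space[OF Q]] by auto
  have "Metric_space Z d"
  proof
    fix p q show "0 \<le> d p q" "d p q = d q p"
      using eps cms_nonneg[OF P] cms_nonneg[OF Q] cms_commute[OF P] cms_commute[OF Q]
      by (auto simp: d_def add_nonneg_pos less_imp_le)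
  next
    fix p q assume "p \<in> Z" "q \<in> Z"
    then show "d p q = 0 \<longleftrightarrow> p = q"
      using eps cms_nonneg[OF P, of "snd p" "snd q"] zero_P zero_Q
      by (auto simp: d_def Z_def prod_eq_iff)
  next
    fix p q w assume "p \<in> Z" "q \<in> Z" "w \<in> Z"
    then obtain i j k x y z where pqw: "p = (i, x)" "q = (j, y)" "w = (k, z)"
      and ijk: "i \<in> {0, 1}" "j \<in> {0, 1}" "k \<in> {0, 1}" and xyz: "x \<in> fst P" "y \<in> fst P" "z \<in> fst P"
      by (auto simp: Z_def)
    have "snd P x z \<le> snd P x y + snd P y z" "snd Q x z \<le> snd Q x y + snd Q y z"
      using cms_triangle[OF P xyz] cms_triangle[OF Q] xyz carrier by auto
    moreover have "snd P x y \<le> snd Q x y" "snd P y z \<le> snd Q y z"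
      "snd Q x y \<le> snd P x y + \<epsilon>" "snd Q y z \<le> snd P y z + \<epsilon>" "snd Q x z \<le> snd P x z + \<epsilon>"
      using le le_eps xyz by auto
    ultimately show "d p w \<le> d p q + d q w"
      using ijk eps cms_nonneg[OF P] cms_commute[OF P] unfolding pqw d_def by auto
  qed
  then show ?thesis
  proof (rule gh_realizable_pairs[OF P Q, where f = "\<lambda>x. (0, x)" and g = "\<lambda>x. (1, x)"])
    show "(\<lambda>x. (0, x)) ` fst P \<subseteq> Z" "(\<lambda>x. (1, x)) ` fst Q \<subseteq> Z"
      using carrier by (auto simp: Z_def)
    show "d (0, x) (0, x') = snd P x x'" "d (1, y) (1, y') = snd Q y y'" for x x' y y'
      by (simp_all add: d_def)
    show "\<exists>y\<in>fst Q. d (0, x) (1, y) \<le> \<epsilon>" if "x \<in> fst P" for x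
      using that carrier cms_zero[OF P that] by (auto simp: d_def intro!: bexI[of _ x])
    show "\<exists>x\<in>fst P. d (0, x) (1, y) \<le> \<epsilon>" if "y \<in> fst Q" for y
      using that carrier cms_zero[OF P] by (force simp: d_def)
  qed
qed

lemma dGH_le_same_carrier:
  assumes P: "is_cms P" and Q: "is_cms Q" and carrier: "fst Q = fst P"
    and le: "\<And>x y. x \<in> fst P \<Longrightarrow> y \<in> fst P \<Longrightarrow> snd P x y \<le> snd Q x y"
    and le_eps: "\<And>x y. x \<in> fst P \<Longrightarrow> y \<in> fst P \<Longrightarrow> snd Q x y \<le> snd P x y + \<epsilon>"
    and "0 \<le> \<epsilon>"
  shows "dGH P Q \<le> \<epsilon>"
proof (rule field_le_epsilon)
  fix \<eta> :: real assume "0 < \<eta>"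
  then have "gh_realizable P Q (\<epsilon> + \<eta>)"
    using le le_eps \<open>0 \<le> \<epsilon>\<close> by (intro gh_realizable_same_carrier[OF P Q carrier]) fastforce+
  then show "dGH P Q \<le> \<epsilon> + \<eta>" by (rule dGH_le[OF P Q])
qed

section \<open>Weighted products\<close>

lemma compact_space_Lipschitz_image:
  assumes M: "Metric_space M d" and M': "Metric_space M' d'"
    and compact: "compact_space (Metric_space.mtopology M d)" and onto: "f ` M = M'"
    and Lipschitz: "\<And>x y. x \<in> M \<Longrightarrow> y \<in> M \<Longrightarrow> d' (f x) (f y) \<le> B * d x y"
  shows "compact_space (Metric_space.mtopology M' d')"
proof -
  interpret Metric_space M d by (rule M)
  have "continuous_map mtopology (Metric_space.mtopology M' d') f"
    unfolding metric_continuous_map[OF M']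
  proof (intro conjI ballI allI impI)
    fix a and \<epsilon> :: real assume a: "a \<in> M" and "0 < \<epsilon>"
    show "\<exists>\<delta>>0. \<forall>x. x \<in> M \<and> d a x < \<delta> \<longrightarrow> d' (f a) (f x) < \<epsilon>"
    proof (intro exI conjI allI impI)
      show "0 < \<epsilon> / (\<bar>B\<bar> + 1)" using \<open>0 < \<epsilon>\<close> by simp
      fix x assume x: "x \<in> M \<and> d a x < \<epsilon> / (\<bar>B\<bar> + 1)"
      have "d' (f a) (f x) \<le> (\<bar>B\<bar> + 1) * d a x"
        using Lipschitz[OF a, of x] x nonneg[of a x] by (smt (verit) mult_right_mono abs_ge_self)
      also have "\<dots> < \<epsilon>" using x by (simp add: field_simps add_pos_nonneg)
      finally show "d' (f a) (f x) < \<epsilon>" .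
    qed
  qed (use onto in simp)
  with compact have "compactin (Metric_space.mtopology M' d') (f ` M)"
    by (intro image_compactin[where X = mtopology]) (simp add: compact_space_def)
  then show ?thesis
    by (simp add: compact_space_def Metric_space.topspace_mtopology[OF M'] onto)
qed

definition wdist :: "cms \<Rightarrow> cms \<Rightarrow> real \<Rightarrow> real \<Rightarrow> real \<times> real \<Rightarrow> real \<times> real \<Rightarrow> real" where
  "wdist X Y a b p q = max (a * snd X (fst p) (fst q)) (b * snd Y (snd p) (snd q))"

definition wprod :: "cms \<Rightarrow> cms \<Rightarrow> real \<Rightarrow> real \<Rightarrow> cms" where
  "wprod X Y a b = (enc ` (fst X \<times> fst Y), \<lambda>u v. wdist X Y a b (dec u) (dec v))"

lemma Metric_space_wdist:
  assumes X: "is_cms X" and Y: "is_cms Y" and a: "0 < a" and b: "0 < b"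
  shows "Metric_space (fst X \<times> fst Y) (wdist X Y a b)"
proof
  fix p q show "0 \<le> wdist X Y a b p q" "wdist X Y a b p q = wdist X Y a b q p"
    using a cms_nonneg[OF X] cms_commute[OF X] cms_commute[OF Y]
    by (auto simp: wdist_def max.coboundedI1)
next
  fix p q assume "p \<in> fst X \<times> fst Y" "q \<in> fst X \<times> fst Y"
  moreover have "0 \<le> a * snd X (fst p) (fst q)" "0 \<le> b * snd Y (snd p) (snd q)"
    using a b cms_nonneg[OF X] cms_nonneg[OF Y] by simp_all
  then have "wdist X Y a b p q = 0 \<longleftrightarrow> snd X (fst p) (fst q) = 0 \<and> snd Y (snd p) (snd q) = 0"
    using a b by (auto simp: wdist_def max_def)
  ultimately show "wdist X Y a b p q = 0 \<longleftrightarrow> p = q"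
    using Metric_space.zero[OF is_cms_Metric_space[OF X]] Metric_space.zero[OF is_cms_Metric_space[OF Y]]
    by (auto simp: prod_eq_iff mem_Times_iff)
next
  fix p q w assume "p \<in> fst X \<times> fst Y" "q \<in> fst X \<times> fst Y" "w \<in> fst X \<times> fst Y"
  then have "a * snd X (fst p) (fst w) \<le> a * snd X (fst p) (fst q) + a * snd X (fst q) (fst w)"
    "b * snd Y (snd p) (snd w) \<le> b * snd Y (snd p) (snd q) + b * snd Y (snd q) (snd w)"
    using a b cms_triangle[OF X] cms_triangle[OF Y]
    by (auto simp: mem_Times_iff simp flip: distrib_left)
  then show "wdist X Y a b p w \<le> wdist X Y a b p q + wdist X Y a b q w"
    unfolding wdist_def by linarith
qed

lemma Metric_space_wprod:
  "is_cms X \<Longrightarrow> is_cms Y \<Longrightarrow> 0 < a \<Longrightarrow> 0 < b \<Longrightarrow> Metric_space (fst (wprod X Y a b)) (snd (wprod X Y a b))"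
  unfolding wprod_def using Metric_space_enc_image[OF Metric_space_wdist] by simp

lemma is_cms_wprod:
  assumes X: "is_cms X" and Y: "is_cms Y" and a: "0 < a" and b: "0 < b"
  shows "is_cms (wprod X Y a b)"
proof -
  interpret Metric_space12 "fst X" "snd X" "fst Y" "snd Y"
    using is_cms_Metric_space[OF X] is_cms_Metric_space[OF Y] by (simp add: Metric_space12_def)
  have "compact_space Prod_metric.mtopology"
    using X Y by (simp add: mtopology_prod_metric compact_space_prod_topology is_cms_def)
  moreover have "wdist X Y a b (dec (enc p)) (dec (enc q)) \<le> (a + b) * prod_dist (snd X) (snd Y) p q" for p q
  proof -
    have "snd X (fst p) (fst q) \<le> prod_dist (snd X) (snd Y) p q"
      "snd Y (snd p) (snd q) \<le> prod_dist (snd X) (snd Y) p q"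
      using component_le_prod_metric(1)[of "fst p" "fst q" "snd p" "snd q"]
        component_le_prod_metric(2)[of "snd p" "snd q" "fst p" "fst q"] by simp_all
    then show ?thesis
      using a b cms_nonneg[OF X] cms_nonneg[OF Y]
      by (simp add: wdist_def distrib_right add_increasing2 add_increasing mult_left_mono)
  qed
  ultimately have "compact_space (Metric_space.mtopology (fst (wprod X Y a b)) (snd (wprod X Y a b)))"
    using Metric_space_wprod[OF assms]
    by (intro compact_space_Lipschitz_image[OF Prod_metric.Metric_space_axioms, where f = enc])
      (auto simp: wprod_def)
  then show ?thesis
    using Metric_space_wprod[OF assms] is_cms_nonempty[OF X] is_cms_nonempty[OF Y]
    by (auto simp: is_cms_def wprod_def)
qed

lemma wprod_simps [simp]:
  "fst (wprod X Y a b) = enc ` (fst X \<times> fst Y)"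
  "snd (wprod X Y a b) (enc p) (enc q) = wdist X Y a b p q"
  by (simp_all add: wprod_def)

lemma diam_wprod:
  assumes X: "is_cms X" and Y: "is_cms Y" and a: "0 < a" and b: "0 < b"
  shows "diam (wprod X Y a b) = max (a * diam X) (b * diam Y)"
proof (rule antisym)
  have P: "is_cms (wprod X Y a b)" by (rule is_cms_wprod[OF assms])
  show "diam (wprod X Y a b) \<le> max (a * diam X) (b * diam Y)"
  proof (rule diam_le[OF P])
    fix u v assume "u \<in> fst (wprod X Y a b)" "v \<in> fst (wprod X Y a b)"
    then obtain x y x' y' where uv: "u = enc (x, y)" "v = enc (x', y')"
      and xy: "x \<in> fst X" "x' \<in> fst X" "y \<in> fst Y" "y' \<in> fst Y" by auto
    have "a * snd X x x' \<le> a * diam X" "b * snd Y y y' \<le> b * diam Y"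
      using dist_le_diam[OF X xy(1,2)] dist_le_diam[OF Y xy(3,4)] a b by simp_all
    then show "snd (wprod X Y a b) u v \<le> max (a * diam X) (b * diam Y)"
      unfolding uv by (auto simp: wdist_def)
  qed
  obtain x0 y0 where x0: "x0 \<in> fst X" and y0: "y0 \<in> fst Y"
    using is_cms_nonempty[OF X] is_cms_nonempty[OF Y] by blast
  have "diam X \<le> diam (wprod X Y a b) / a"
  proof (rule diam_le[OF X])
    fix x x' assume "x \<in> fst X" "x' \<in> fst X"
    then have "wdist X Y a b (x, y0) (x', y0) \<le> diam (wprod X Y a b)"
      using dist_le_diam[OF P, of "enc (x, y0)" "enc (x', y0)"] y0 by auto
    then show "snd X x x' \<le> diam (wprod X Y a b) / a"
      using a cms_nonneg[OF X, of x x'] cms_zero[OF Y y0] by (simp add: wdist_def field_simps)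
  qed
  moreover have "diam Y \<le> diam (wprod X Y a b) / b"
  proof (rule diam_le[OF Y])
    fix y y' assume "y \<in> fst Y" "y' \<in> fst Y"
    then have "wdist X Y a b (x0, y) (x0, y') \<le> diam (wprod X Y a b)"
      using dist_le_diam[OF P, of "enc (x0, y)" "enc (x0, y')"] x0 by auto
    then show "snd Y y y' \<le> diam (wprod X Y a b) / b"
      using b cms_nonneg[OF Y, of y y'] cms_zero[OF X x0] by (simp add: wdist_def field_simps)
  qed
  ultimately show "max (a * diam X) (b * diam Y) \<le> diam (wprod X Y a b)"
    using a b by (simp add: field_simps)
qed

lemma wdist_mono:
  assumes X: "is_cms X" and Y: "is_cms Y" and a: "0 \<le> a" "a \<le> a'" and b: "0 \<le> b" "b \<le> b'"
    and p: "p \<in> fst X \<times> fst Y" and q: "q \<in> fst X \<times> fst Y"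
  shows "wdist X Y a b p q \<le> wdist X Y a' b' p q"
    and "wdist X Y a' b' p q \<le> wdist X Y a b p q + ((a' - a) * diam X + (b' - b) * diam Y)"
proof -
  let ?dX = "snd X (fst p) (fst q)" and ?dY = "snd Y (snd p) (snd q)"
  have dX: "0 \<le> ?dX" "?dX \<le> diam X" and dY: "0 \<le> ?dY" "?dY \<le> diam Y"
    using cms_nonneg[OF X] cms_nonneg[OF Y] dist_le_diam[OF X] dist_le_diam[OF Y] p q
    by (auto simp: mem_Times_iff)
  have "a * ?dX \<le> a' * ?dX" "b * ?dY \<le> b' * ?dY"
    using a b dX dY by (simp_all add: mult_right_mono)
  then show "wdist X Y a b p q \<le> wdist X Y a' b' p q"
    by (auto simp: wdist_def)
  have "(a' - a) * ?dX \<le> (a' - a) * diam X" "(b' - b) * ?dY \<le> (b' - b) * diam Y"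
    "0 \<le> (a' - a) * diam X" "0 \<le> (b' - b) * diam Y"
    using a b dX dY by (simp_all add: mult_left_mono)
  then show "wdist X Y a' b' p q \<le> wdist X Y a b p q + ((a' - a) * diam X + (b' - b) * diam Y)"
    by (auto simp: wdist_def algebra_simps)
qed

lemma dGH_wprod_mono:
  assumes X: "is_cms X" and Y: "is_cms Y" and a: "0 < a" "a \<le> a'" and b: "0 < b" "b \<le> b'"
  shows "dGH (wprod X Y a b) (wprod X Y a' b') \<le> (a' - a) * diam X + (b' - b) * diam Y"
proof (rule dGH_le_same_carrier)
  show "is_cms (wprod X Y a b)" "is_cms (wprod X Y a' b')"
    using a b by (simp_all add: is_cms_wprod[OF X Y])
  show "0 \<le> (a' - a) * diam X + (b' - b) * diam Y"
    using a b diam_nonneg[OF X] diam_nonneg[OF Y] by simp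
  show "snd (wprod X Y a b) u v \<le> snd (wprod X Y a' b') u v"
    and "snd (wprod X Y a' b') u v \<le> snd (wprod X Y a b) u v + ((a' - a) * diam X + (b' - b) * diam Y)"
    if "u \<in> fst (wprod X Y a b)" "v \<in> fst (wprod X Y a b)" for u v
    using that wdist_mono[OF X Y _ a(2) _ b(2)] a b by auto
qed simp

lemma dGH_wprod_left:
  assumes X: "is_cms X" and Y: "is_cms Y" and b: "0 < b"
  shows "dGH X (wprod X Y 1 b) \<le> b * diam Y"
proof -
  obtain y0 where y0: "y0 \<in> fst Y" using is_cms_nonempty[OF Y] by blast
  have "gh_realizable X (wprod X Y 1 b) (b * diam Y)"
  proof (rule gh_realizable_net[OF X is_cms_wprod[OF X Y zero_less_one b], where f = "\<lambda>x. enc (x, y0)"])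
    show "isom_emb X (fst (wprod X Y 1 b)) (snd (wprod X Y 1 b)) (\<lambda>x. enc (x, y0))"
      using y0 cms_zero[OF Y y0] cms_nonneg[OF X] by (auto simp: isom_emb_def wdist_def)
    fix u assume "u \<in> fst (wprod X Y 1 b)"
    then obtain x y where u: "u = enc (x, y)" "x \<in> fst X" "y \<in> fst Y" by auto
    have "b * snd Y y0 y \<le> b * diam Y" using dist_le_diam[OF Y y0 u(3)] b by simp
    then show "\<exists>x\<in>fst X. snd (wprod X Y 1 b) (enc (x, y0)) u \<le> b * diam Y"
      using u cms_zero[OF X u(2)] cms_nonneg[OF Y, of y0 y] b
      by (intro bexI[of _ x]) (auto simp: wdist_def)
  qed (use b diam_nonneg[OF Y] in simp_all)
  then show ?thesis by (rule dGH_le[OF X is_cms_wprod[OF X Y zero_less_one b]])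
qed

lemma dGH_wprod_right:
  assumes X: "is_cms X" and Y: "is_cms Y" and a: "0 < a"
  shows "dGH Y (wprod X Y a 1) \<le> a * diam X"
proof -
  obtain x0 where x0: "x0 \<in> fst X" using is_cms_nonempty[OF X] by blast
  have "gh_realizable Y (wprod X Y a 1) (a * diam X)"
  proof (rule gh_realizable_net[OF Y is_cms_wprod[OF X Y a zero_less_one], where f = "\<lambda>y. enc (x0, y)"])
    show "isom_emb Y (fst (wprod X Y a 1)) (snd (wprod X Y a 1)) (\<lambda>y. enc (x0, y))"
      using x0 cms_zero[OF X x0] cms_nonneg[OF Y] by (auto simp: isom_emb_def wdist_def)
    fix u assume "u \<in> fst (wprod X Y a 1)"
    then obtain x y where u: "u = enc (x, y)" "x \<in> fst X" "y \<in> fst Y" by auto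
    have "a * snd X x0 x \<le> a * diam X" using dist_le_diam[OF X x0 u(2)] a by simp
    then show "\<exists>y\<in>fst Y. snd (wprod X Y a 1) (enc (x0, y)) u \<le> a * diam X"
      using u cms_zero[OF Y u(3)] cms_nonneg[OF X, of x0 x] a
      by (intro bexI[of _ y]) (auto simp: wdist_def)
  qed (use a diam_nonneg[OF X] in simp_all)
  then show ?thesis by (rule dGH_le[OF Y is_cms_wprod[OF X Y a zero_less_one]])
qed

section \<open>Paths on spheres around the one-point space\<close>

definition gh_interpolation :: "cms \<Rightarrow> cms \<Rightarrow> real \<Rightarrow> cms" where
  "gh_interpolation X Y t =
    (if t \<le> 0 then X else if 1 \<le> t then Y else wprod X Y (min 1 (2 - 2 * t)) (min 1 (2 * t)))"

lemma gh_interpolation_endpoints [simp]: "gh_interpolation X Y 0 = X" "gh_interpolation X Y 1 = Y"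
  by (simp_all add: gh_interpolation_def)

lemma gh_interpolation_first_half: "0 < t \<Longrightarrow> t \<le> 1/2 \<Longrightarrow> gh_interpolation X Y t = wprod X Y 1 (2 * t)"
  unfolding gh_interpolation_def by (simp add: min_absorb1 min_absorb2)

lemma gh_interpolation_second_half: "1/2 \<le> t \<Longrightarrow> t < 1 \<Longrightarrow> gh_interpolation X Y t = wprod X Y (2 - 2 * t) 1"
  unfolding gh_interpolation_def by (simp add: min_absorb1 min_absorb2)

lemma is_cms_gh_interpolation:
  "is_cms X \<Longrightarrow> is_cms Y \<Longrightarrow> is_cms (gh_interpolation X Y t)"
  unfolding gh_interpolation_def by (auto intro: is_cms_wprod)

lemma diam_gh_interpolation:
  assumes X: "is_cms X" and Y: "is_cms Y" and "diam X = D" "diam Y = D"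
  shows "diam (gh_interpolation X Y t) = D"
proof -
  have "0 \<le> D" using diam_nonneg[OF X] \<open>diam X = D\<close> by simp
  consider "t \<le> 0 \<or> 1 \<le> t" | "0 < t" "t \<le> 1/2" | "1/2 \<le> t" "t < 1" by linarith
  then show ?thesis
  proof cases
    case 2
    then have "2 * t * D \<le> D" using \<open>0 \<le> D\<close> by (simp add: mult_left_le_one_le)
    with 2 show ?thesis using assms by (simp add: gh_interpolation_first_half diam_wprod)
  next
    case 3
    then have "(2 - 2 * t) * D \<le> D" using \<open>0 \<le> D\<close> by (simp add: mult_left_le_one_le)
    with 3 show ?thesis using assms by (simp add: gh_interpolation_second_half diam_wprod)
  qed (use assms in \<open>auto simp: gh_interpolation_def\<close>)
qed

lemma dGH_gh_interpolation_ordered: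
  assumes X: "is_cms X" and Y: "is_cms Y" and dX: "diam X = D" and dY: "diam Y = D"
    and st: "0 \<le> s" "s \<le> t" "t \<le> 1" and same_half: "t \<le> 1/2 \<or> 1/2 \<le> s"
  shows "dGH (gh_interpolation X Y s) (gh_interpolation X Y t) \<le> 2 * D * (t - s)"
proof -
  consider "s = t" | "s < t" "t \<le> 1/2" "s = 0" | "s < t" "t \<le> 1/2" "0 < s"
    | "s < t" "1/2 \<le> s" "t = 1" | "s < t" "1/2 \<le> s" "t < 1"
    using st same_half by linarith
  then show ?thesis
  proof cases
    case 1
    then show ?thesis using dGH_self[OF is_cms_gh_interpolation[OF X Y]] by simp
  next
    case 2
    then have "dGH X (gh_interpolation X Y t) \<le> 2 * t * D"
      using dGH_wprod_left[OF X Y, of "2 * t"] dY by (simp add: gh_interpolation_first_half)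
    with 2 show ?thesis by (simp add: mult_ac)
  next
    case 3
    then show ?thesis
      using dGH_wprod_mono[OF X Y, of 1 1 "2 * s" "2 * t"] dY
      by (simp add: gh_interpolation_first_half algebra_simps)
  next
    case 4
    then show ?thesis
      using dGH_wprod_right[OF X Y, of "2 - 2 * s"] dX
      by (simp add: gh_interpolation_second_half dGH_commute algebra_simps)
  next
    case 5
    then show ?thesis
      using dGH_wprod_mono[OF X Y, of "2 - 2 * t" "2 - 2 * s" 1 1] dX
      by (simp add: gh_interpolation_second_half dGH_commute algebra_simps)
  qed
qed

lemma dGH_gh_interpolation:
  assumes X: "is_cms X" and Y: "is_cms Y" and "diam X = D" "diam Y = D"
    and "s \<in> {0..1}" "t \<in> {0..1}" and same_half: "(s \<le> 1/2 \<and> t \<le> 1/2) \<or> (1/2 \<le> s \<and> 1/2 \<le> t)"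
  shows "dGH (gh_interpolation X Y s) (gh_interpolation X Y t) \<le> 2 * D * \<bar>s - t\<bar>"
proof (cases "s \<le> t")
  case True
  then show ?thesis using dGH_gh_interpolation_ordered[OF assms(1-4), of s t] assms(5-7) by auto
next
  case False
  then show ?thesis
    using dGH_gh_interpolation_ordered[OF assms(1-4), of t s] assms(5-7) by (auto simp: dGH_commute)
qed

lemma gh_interpolation_continuous:
  assumes X: "is_cms X" and Y: "is_cms Y" and dX: "diam X = D" and dY: "diam Y = D"
    and t: "t \<in> {0..1}" and e: "0 < e"
  shows "\<exists>\<delta>>0. \<forall>s\<in>{0..1}. \<bar>s - t\<bar> < \<delta> \<longrightarrow> dGH (gh_interpolation X Y s) (gh_interpolation X Y t) < e"
proof -
  have "0 \<le> D" using diam_nonneg[OF X] dX by simp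
  define \<delta> where "\<delta> = min (e / (2 * D + 1)) (if t = 1/2 then 1 else \<bar>t - 1/2\<bar>)"
  have "0 < \<delta>" using e \<open>0 \<le> D\<close> by (simp add: \<delta>_def)
  moreover have "dGH (gh_interpolation X Y s) (gh_interpolation X Y t) < e"
    if s: "s \<in> {0..1}" and "\<bar>s - t\<bar> < \<delta>" for s
  proof -
    have "t = 1/2 \<or> \<bar>s - t\<bar> < \<bar>t - 1/2\<bar>"
      using \<open>\<bar>s - t\<bar> < \<delta>\<close> by (cases "t = 1/2") (simp_all add: \<delta>_def)
    then have "(s \<le> 1/2 \<and> t \<le> 1/2) \<or> (1/2 \<le> s \<and> 1/2 \<le> t)"
      by (auto simp: abs_real_def split: if_splits)
    then have "dGH (gh_interpolation X Y s) (gh_interpolation X Y t) \<le> 2 * D * \<bar>s - t\<bar>"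
      by (rule dGH_gh_interpolation[OF X Y dX dY s t])
    also have "\<dots> \<le> 2 * D * (e / (2 * D + 1))"
      using \<open>\<bar>s - t\<bar> < \<delta>\<close> \<open>0 \<le> D\<close> by (intro mult_left_mono) (auto simp: \<delta>_def)
    also have "\<dots> < e" using e \<open>0 \<le> D\<close> by (simp add: field_simps)
    finally show ?thesis .
  qed
  ultimately show ?thesis by blast
qed

theorem corollary2:
  fixes r :: real
  assumes "r \<ge> 0"
  shows "gh_path_connected {Y. is_cms Y \<and> dGH Delta1 Y = r}"
  unfolding gh_path_connected_def
proof (intro ballI)
  fix Y0 Y1 assume "Y0 \<in> {Y. is_cms Y \<and> dGH Delta1 Y = r}" "Y1 \<in> {Y. is_cms Y \<and> dGH Delta1 Y = r}"
  then have Y0: "is_cms Y0" "diam Y0 = 2 * r" and Y1: "is_cms Y1" "diam Y1 = 2 * r"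
    using dGH_Delta1[of Y0] dGH_Delta1[of Y1] by auto
  let ?\<gamma> = "gh_interpolation Y0 Y1"
  have on_sphere: "is_cms (?\<gamma> t) \<and> dGH Delta1 (?\<gamma> t) = r" for t
    using dGH_Delta1[OF is_cms_gh_interpolation[OF Y0(1) Y1(1)]]
      diam_gh_interpolation[OF Y0(1) Y1(1) Y0(2) Y1(2)] is_cms_gh_interpolation[OF Y0(1) Y1(1)] by simp
  show "\<exists>\<gamma>::real \<Rightarrow> cms. (\<forall>t\<in>{0..1}. \<gamma> t \<in> {Y. is_cms Y \<and> dGH Delta1 Y = r}) \<and> \<gamma> 0 = Y0 \<and> \<gamma> 1 = Y1 \<and>
      (\<forall>t\<in>{0..1}. \<forall>e>0. \<exists>\<delta>>0. \<forall>s\<in>{0..1}. \<bar>s - t\<bar> < \<delta> \<longrightarrow> dGH (\<gamma> s) (\<gamma> t) < e)"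
  proof (intro exI[where x = ?\<gamma>] conjI ballI allI impI)
    show "?\<gamma> t \<in> {Y. is_cms Y \<and> dGH Delta1 Y = r}" for t using on_sphere by simp
    show "\<exists>\<delta>>0. \<forall>s\<in>{0..1}. \<bar>s - t\<bar> < \<delta> \<longrightarrow> dGH (?\<gamma> s) (?\<gamma> t) < e"
      if "t \<in> {0..1}" "0 < e" for t e
      by (rule gh_interpolation_continuous[OF Y0(1) Y1(1) Y0(2) Y1(2) that])
  qed simp_all
qed

end
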